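(* Let $S_1=\sum_{k=0}^\infty\frac{1}{(3k+2)(3k+4)}=\frac12-\frac{\sqrt3\pi}{18}$. Then \begin{align*} &\sum_{n=0}^\infty \frac{1}{(3n+1)(3n+4)\binom{2n+2}{n+1}}=\frac23 S_1,\\ &\sum_{n=0}^\infty \frac{(27n^2+51n+23)(\frac23)_n}{(3n+1)(3n+4)(n+1)(\frac{11}{6})_n}\,\frac{1}{4^n}=30S_1,\\ &\sum_{n=0}^\infty \frac{189n^3+495n^2+414n+110}{(6n+1)(6n+7)(6n+5)(2n+1)}\,\frac{1}{\binom{6n}{3n}}=16S_1,\\ &\sum_{n=0}^\infty \frac{270n^3+720n^2+633n+185}{(n+1)(6n+7)}\,\frac{(\frac23)_n^2}{(\frac43)_n(\frac{11}{6})_n}\,\frac{1}{(-4)^n}=120S_1,\\ &\sum_{n=0}^\infty (30n^2+45n+16)\,\frac{(\frac16)_n(\frac23)_n^2(1)_n}{(\frac43)_n(\frac73)_n(\frac32)_n(\frac{11}{6})_n}\,\frac{1}{(-4)^n}=80S_1. \end{align*}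
   Context: $(x)_n=\Gamma(x+n)/\Gamma(x)=x(x+1)\cdots(x+n-1)$ denotes the rising factorial (Pochhammer symbol). *)

theory Defs
  imports Complex_Main
begin

end

theory Submission
  imports Defs "HOL-Real_Asymp.Real_Asymp"
begin

(*
  Each of the five series is sum_n G(n,0) for a WZ pair (F, G) with G = R * F, where
  F(0,k) = 1/((3k+2)(3k+4)), F is hypergeometric in n and in k, and the rational
  certificate R makes F(n+1,k) - F(n,k) = G(n,k+1) - G(n,k).  Summing this over k and
  telescoping in n gives sum_n G(n,0) = sum_k F(0,k) = S1, and the n-th summand of each
  series is a constant multiple of G(n,0), as both have the same term ratio.

  S1 itself is the integral over [0,1] of sum_k (x^(3k+1) - x^(3k+3)) = x(1+x)/(1+x+x^2),
  whose antiderivative is x - 2/sqrt 3 * (arctan ((2x+1)/sqrt 3) - pi/6).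
*)

section \<open>The value of S1\<close>

lemma abs_diff_le_by_derivative_bound:
  fixes f g f' g' :: "real \<Rightarrow> real"
  assumes "a \<le> b"
    and f: "\<And>x. a \<le> x \<Longrightarrow> x \<le> b \<Longrightarrow> (f has_real_derivative f' x) (at x)"
    and g: "\<And>x. a \<le> x \<Longrightarrow> x \<le> b \<Longrightarrow> (g has_real_derivative g' x) (at x)"
    and bound: "\<And>x. a \<le> x \<Longrightarrow> x \<le> b \<Longrightarrow> \<bar>f' x\<bar> \<le> g' x"
  shows "\<bar>f b - f a\<bar> \<le> g b - g a"
proof -
  have "g a - f a \<le> g b - f b"
  proof (rule DERIV_nonneg_imp_nondecreasing[OF \<open>a \<le> b\<close>])
    fix x assume x: "a \<le> x" "x \<le> b"
    have "0 \<le> g' x - f' x" using bound[OF x] by linarith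
    with DERIV_diff[OF g[OF x] f[OF x]]
    show "\<exists>y. ((\<lambda>x. g x - f x) has_real_derivative y) (at x) \<and> 0 \<le> y" by blast
  qed
  moreover have "g a + f a \<le> g b + f b"
  proof (rule DERIV_nonneg_imp_nondecreasing[OF \<open>a \<le> b\<close>])
    fix x assume x: "a \<le> x" "x \<le> b"
    have "0 \<le> g' x + f' x" using bound[OF x] by linarith
    with DERIV_add[OF g[OF x] f[OF x]]
    show "\<exists>y. ((\<lambda>x. g x + f x) has_real_derivative y) (at x) \<and> 0 \<le> y" by blast
  qed
  ultimately show ?thesis by linarith
qed

lemma one_add_x_add_x2_pos: "0 < 1 + x + (x::real)^2"
  using zero_le_power2[of "x + 1/2"] by (simp add: power2_eq_square algebra_simps)

definition S1_term :: "nat \<Rightarrow> real" where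
  "S1_term k = 1 / ((3 * real k + 2) * (3 * real k + 4))"

lemma S1_term_nonneg: "0 \<le> S1_term k"
  by (simp add: S1_term_def)

(* At x = 1 this is twice the N-th partial sum of S1, as 1/(3k+2) - 1/(3k+4) = 2 * S1_term k. *)

definition S1_partial :: "nat \<Rightarrow> real \<Rightarrow> real" where
  "S1_partial N x = (\<Sum>k<N. x ^ (3*k+2) / real (3*k+2) - x ^ (3*k+4) / real (3*k+4))"

definition S1_primitive :: "real \<Rightarrow> real" where
  "S1_primitive x = x - 2 / sqrt 3 * (arctan ((2*x + 1) / sqrt 3) - pi/6)"

lemma S1_partial_deriv:
  "(S1_partial N has_real_derivative (\<Sum>k<N. x ^ (3*k+1) - x ^ (3*k+3))) (at x)"
proof -
  have "(S1_partial N has_real_derivative (\<Sum>k<N.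
      real (3*k+2) * x ^ (3*k+2 - Suc 0) / real (3*k+2)
      - real (3*k+4) * x ^ (3*k+4 - Suc 0) / real (3*k+4))) (at x)"
    unfolding S1_partial_def by (intro DERIV_sum DERIV_diff DERIV_cdivide DERIV_pow)
  then show ?thesis by (simp add: add.commute del: of_nat_add of_nat_mult)
qed

lemma S1_primitive_deriv: "(S1_primitive has_real_derivative x * (1 + x) / (1 + x + x^2)) (at x)"
proof -
  have deriv: "(S1_primitive has_real_derivative
      1 - 2 / sqrt 3 * (inverse (1 + ((2*x + 1) / sqrt 3)^2) * (2 / sqrt 3))) (at x)"
    unfolding S1_primitive_def by (rule derivative_eq_intros refl | simp)+
  have "((2*x + 1) / sqrt 3)^2 = (2*x + 1)^2 / 3" "2 / sqrt 3 * (2 / sqrt 3) = (4/3::real)"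
    by (simp_all add: power_divide field_simps)
  then have sqrt3: "2 / sqrt 3 * (inverse (1 + ((2*x + 1) / sqrt 3)^2) * (2 / sqrt 3))
      = 4/3 * inverse (1 + (2*x + 1)^2 / 3)"
    by (metis mult.commute mult.left_commute)
  have "1 - 4/3 * inverse (1 + (2*x + 1)^2 / 3) = x * (1 + x) / (1 + x + x^2)"
    using one_add_x_add_x2_pos[of x] by (simp add: field_simps power2_eq_square)
  with deriv show ?thesis unfolding sqrt3 by simp
qed

lemma S1_primitive_0: "S1_primitive 0 = 0"
  using arctan_tan[of "pi/6"] by (simp add: S1_primitive_def tan_30)

lemma S1_primitive_1: "S1_primitive 1 = 1 - sqrt 3 * pi / 9"
proof -
  have "arctan (3 / sqrt 3) = pi/3"
    using arctan_tan[of "pi/3"] by (simp add: tan_60 real_div_sqrt)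
  then have "S1_primitive 1 = 1 - 2 / sqrt 3 * (pi/3 - pi/6)"
    by (simp add: S1_primitive_def del: divide_const_simps)
  also have "\<dots> = 1 - sqrt 3 * pi / 9"
    by (simp add: field_simps)
  finally show ?thesis .
qed

lemma S1_remainder_deriv:
  "((\<lambda>x. S1_partial N x - S1_primitive x) has_real_derivative
      - (x * (1 + x) / (1 + x + x^2) * x ^ (3*N))) (at x)"
proof -
  have "(\<Sum>k<N. x ^ (3*k+1) - x ^ (3*k+3)) * (1 + x + x^2) = x * (1 + x) * (1 - x ^ (3*N))"
    by (induction N) (simp_all add: algebra_simps power_add power2_eq_square power3_eq_cube)
  then have sum_eq: "(\<Sum>k<N. x ^ (3*k+1) - x ^ (3*k+3)) = x * (1 + x) / (1 + x + x^2) * (1 - x ^ (3*N))"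
    using one_add_x_add_x2_pos[of x] by (simp add: field_simps)
  have "(\<Sum>k<N. x ^ (3*k+1) - x ^ (3*k+3)) - x * (1 + x) / (1 + x + x^2)
      = - (x * (1 + x) / (1 + x + x^2) * x ^ (3*N))"
    unfolding sum_eq by (simp add: right_diff_distrib)
  with DERIV_diff[OF S1_partial_deriv S1_primitive_deriv, of N x] show ?thesis
    by simp
qed

lemma S1_partial_error: "\<bar>S1_partial N 1 - S1_primitive 1\<bar> \<le> 1 / (3 * real N + 1)"
proof -
  have "\<bar>(S1_partial N 1 - S1_primitive 1) - (S1_partial N 0 - S1_primitive 0)\<bar>
        \<le> 1 ^ (3*N+1) / real (3*N+1) - 0 ^ (3*N+1) / real (3*N+1)"
  proof (rule abs_diff_le_by_derivative_bound[OF _ S1_remainder_deriv])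
    show "((\<lambda>x. x ^ (3*N+1) / real (3*N+1)) has_real_derivative x ^ (3*N)) (at x)" for x
      using DERIV_cdivide[OF DERIV_pow[of "3*N+1" x], of "real (3*N+1)"]
      by (simp del: of_nat_add of_nat_mult)
    show "\<bar>- (x * (1 + x) / (1 + x + x^2) * x ^ (3*N))\<bar> \<le> x ^ (3*N)" if "0 \<le> x" for x :: real
    proof -
      have "0 \<le> x * (1 + x) / (1 + x + x^2)" "x * (1 + x) / (1 + x + x^2) \<le> 1"
        using that one_add_x_add_x2_pos[of x] by (simp_all add: power2_eq_square algebra_simps)
      moreover from this have "x * (1 + x) / (1 + x + x^2) * x ^ (3*N) \<le> x ^ (3*N)"
        using that by (intro mult_left_le_one_le) simp_all
      ultimately show ?thesis using that by (simp add: abs_mult)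
    qed
  qed simp
  moreover have "S1_partial N 0 = 0" by (simp add: S1_partial_def power_0_left)
  ultimately show ?thesis by (simp add: S1_primitive_0 add.commute)
qed

lemma S1_sums: "S1_term sums (1/2 - sqrt 3 * pi / 18)"
proof -
  have "(\<lambda>N. S1_partial N 1 - S1_primitive 1) \<longlonglongrightarrow> 0"
  proof (rule tendsto_0_le[where K = 1])
    show "(\<lambda>N. 1 / (3 * real N + 1)) \<longlonglongrightarrow> 0" by real_asymp
    show "\<forall>\<^sub>F N in sequentially. norm (S1_partial N 1 - S1_primitive 1) \<le> norm (1 / (3 * real N + 1)) * 1"
      using S1_partial_error by simp
  qed
  moreover have "S1_partial N 1 = (\<Sum>k<N. 2 * S1_term k)" for N
    unfolding S1_partial_def S1_term_def by (intro sum.cong refl) (simp add: field_simps)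
  ultimately have "(\<lambda>k. 2 * S1_term k) sums S1_primitive 1"
    by (simp add: sums_def LIM_zero_iff)
  from sums_divide[OF this, of 2] show ?thesis by (simp add: S1_primitive_1 diff_divide_distrib)
qed

section \<open>Summation along WZ pairs\<close>

lemma LIMSEQ_zero_by_ratio:
  fixes b beta :: "nat \<Rightarrow> real"
  assumes ratio: "\<And>n. b (Suc n) = beta n * b n" and nonneg: "\<And>n. 0 \<le> b n"
    and lim: "beta \<longlonglongrightarrow> L" and "L < 1"
  shows "b \<longlonglongrightarrow> 0"
proof -
  define c where "c = (L + 1) / 2"
  have "L < c" "c < 1" using \<open>L < 1\<close> by (auto simp: c_def)
  then obtain N where N: "\<And>n. n \<ge> N \<Longrightarrow> beta n < c"
    using order_tendstoD(2)[OF lim] by (meson eventually_sequentially)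
  have "summable b"
  proof (rule summable_ratio_test[OF \<open>c < 1\<close>, of N])
    fix n assume "n \<ge> N"
    then have "beta n * b n \<le> c * b n" using N[of n] nonneg[of n] by (intro mult_right_mono) auto
    then show "norm (b (Suc n)) \<le> c * norm (b n)" using ratio[of n] nonneg[of n] nonneg[of "Suc n"] by simp
  qed
  then show ?thesis by (rule summable_LIMSEQ_zero)
qed

lemma wz_sums:
  fixes F G :: "nat \<Rightarrow> nat \<Rightarrow> real"
  assumes wz: "\<And>n k. F (Suc n) k - F n k = G n (Suc k) - G n k"
    and G_lim: "\<And>n. G n \<longlonglongrightarrow> 0"
    and F_summable: "\<And>n. summable (F n)"
    and F_suminf_lim: "(\<lambda>n. suminf (F n)) \<longlonglongrightarrow> 0"
  shows "(\<lambda>n. G n 0) sums suminf (F 0)"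
proof -
  have "G n 0 = suminf (F n) - suminf (F (Suc n))" for n
  proof -
    have "(\<lambda>k. F (Suc n) k - F n k) sums (suminf (F (Suc n)) - suminf (F n))"
      by (intro sums_diff summable_sums F_summable)
    moreover have "(\<lambda>k. G n (Suc k) - G n k) sums (0 - G n 0)"
      by (rule telescope_sums[OF G_lim])
    ultimately show ?thesis using wz sums_unique2 by fastforce
  qed
  with telescope_sums'[OF F_suminf_lim] show ?thesis by simp
qed

(* The hypothesis certificate is the WZ equation for G = R * F divided by F n k. *)

lemma wz_sums_by_certificate:
  fixes f :: "nat \<Rightarrow> real" and F R rho sig :: "nat \<Rightarrow> nat \<Rightarrow> real" and B :: "nat \<Rightarrow> real"
  assumes f_sums: "f sums s" and f_nonneg: "\<And>k. 0 \<le> f k"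
    and F_0: "\<And>k. F 0 k = f k"
    and rho: "\<And>n k. F (Suc n) k = rho n k * F n k"
    and sig: "\<And>n k. F n (Suc k) = sig n k * F n k"
    and certificate: "\<And>n k. rho n k - 1 = R n (Suc k) * sig n k - R n k"
    and F_bound: "\<And>n k. \<bar>F n k\<bar> \<le> B n * f k"
    and B_lim: "B \<longlonglongrightarrow> 0"
    and Rf_lim: "\<And>n. (\<lambda>k. R n k * f k) \<longlonglongrightarrow> 0"
  shows "(\<lambda>n. R n 0 * F n 0) sums s"
proof -
  define G where "G n k = R n k * F n k" for n k
  have wz: "F (Suc n) k - F n k = G n (Suc k) - G n k" for n k
  proof -
    have "F (Suc n) k - F n k = (rho n k - 1) * F n k"
      unfolding rho by (simp add: left_diff_distrib)
    also have "\<dots> = G n (Suc k) - G n k"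
      unfolding certificate G_def sig by (simp add: left_diff_distrib)
    finally show ?thesis .
  qed
  have F_le: "norm (F n k) \<le> \<bar>B n\<bar> * f k" for n k
    using F_bound[of n k] mult_right_mono[OF abs_ge_self f_nonneg[of k], of "B n"] by simp
  have "summable f" using f_sums by (rule sums_summable)
  then have Bf_summable: "summable (\<lambda>k. \<bar>B n\<bar> * f k)" for n
    by (rule summable_mult)
  have F_summable: "summable (F n)" for n
    using F_le by (intro summable_comparison_test[OF _ Bf_summable]) blast
  have F_lim: "(\<lambda>n. suminf (F n)) \<longlonglongrightarrow> 0"
  proof (rule tendsto_0_le[OF B_lim, where K = s])
    have "norm (suminf (F n)) \<le> (\<Sum>k. \<bar>B n\<bar> * f k)" for n
      by (rule norm_suminf_le[OF F_le Bf_summable])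
    also have "(\<Sum>k. \<bar>B n\<bar> * f k) = norm (B n) * s" for n
      using suminf_mult[OF \<open>summable f\<close>, of "\<bar>B n\<bar>"] sums_unique[OF f_sums] by simp
    finally show "\<forall>\<^sub>F n in sequentially. norm (suminf (F n)) \<le> norm (B n) * s"
      by (intro always_eventually allI)
  qed
  have G_lim: "G n \<longlonglongrightarrow> 0" for n
  proof (rule tendsto_0_le[OF Rf_lim, where K = "\<bar>B n\<bar>"])
    have "norm (G n k) = \<bar>R n k\<bar> * norm (F n k)" for k
      by (simp add: G_def abs_mult)
    also have "\<dots> k \<le> \<bar>R n k\<bar> * (\<bar>B n\<bar> * f k)" for k
      by (intro mult_left_mono F_le abs_ge_zero)
    also have "\<dots> k = norm (R n k * f k) * \<bar>B n\<bar>" for k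
      using f_nonneg[of k] by (simp add: abs_mult)
    finally show "\<forall>\<^sub>F k in sequentially. norm (G n k) \<le> norm (R n k * f k) * \<bar>B n\<bar>"
      by (intro always_eventually allI)
  qed
  have "(\<lambda>n. G n 0) sums suminf (F 0)"
    by (rule wz_sums[of F G, OF wz G_lim F_summable F_lim])
  moreover have "F 0 = f" using F_0 by (rule ext)
  then have "suminf (F 0) = s" using sums_unique[OF f_sums] by simp
  ultimately show ?thesis by (simp add: G_def)
qed

lemma sums_by_equal_term_ratios:
  fixes T G q :: "nat \<Rightarrow> real"
  assumes "G sums s" and "T 0 = c * G 0"
    and "\<And>n. T (Suc n) = T n * q n" and "\<And>n. G (Suc n) = G n * q n"
  shows "T sums (c * s)"
proof -
  have "T = (\<lambda>n. c * G n)"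
  proof
    show "T n = c * G n" for n by (induction n) (simp_all add: assms)
  qed
  with sums_mult[OF assms(1), of c] show ?thesis by simp
qed

lemma pochhammer_add_one:
  fixes a :: real
  assumes "a \<noteq> 0"
  shows "pochhammer (a + 1) n = pochhammer a n * (a + real n) / a"
  using pochhammer_rec[of a n] pochhammer_Suc[of a n] assms by (simp add: field_simps)

lemma pochhammer_mono:
  fixes a b :: real
  assumes "0 < a" "a \<le> b"
  shows "pochhammer a n \<le> pochhammer b n"
proof (induction n)
  case (Suc n)
  then show ?case
    using assms by (simp add: pochhammer_Suc mult_mono pochhammer_pos less_imp_le)
qed simp

lemma pochhammer_shift_ge:
  fixes a x :: real
  assumes "0 < a" "0 \<le> x"
  shows "(x + a) / a * pochhammer a (Suc m) \<le> pochhammer (x + a) (Suc m)"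
proof -
  have "(x + a) / a * pochhammer a (Suc m) = (x + a) * pochhammer (a + 1) m"
    using assms by (simp add: pochhammer_rec)
  also have "\<dots> \<le> (x + a) * pochhammer (x + a + 1) m"
    using assms by (intro mult_left_mono pochhammer_mono) auto
  also have "\<dots> = pochhammer (x + a) (Suc m)" by (simp add: pochhammer_rec)
  finally show ?thesis .
qed

lemma quotient_pochhammer_shift:
  fixes a b c :: real
  assumes "0 < a" "0 < b"
  shows "c / (pochhammer (a + 1) m * pochhammer (b + 1) m) =
         a / (a + real m) * (b / (b + real m)) * (c / (pochhammer a m * pochhammer b m))"
  using assms pochhammer_pos[OF assms(1), of m] pochhammer_pos[OF assms(2), of m]
  by (simp add: pochhammer_add_one[of a] pochhammer_add_one[of b] del: One_nat_def,
      simp add: field_simps)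

lemma quotient_pochhammer_linear_shift:
  fixes a b c :: real
  assumes "0 < a" "0 < b"
  shows "c / (pochhammer (a + 1) m * (b + 1)) =
         a / (a + real m) * (b / (b + 1)) * (c / (pochhammer a m * b))"
  using assms pochhammer_pos[OF assms(1), of m]
  by (simp add: pochhammer_add_one[of a], simp add: field_simps)

(* Bounds every WZ kernel by a multiple of S1_term, uniformly in k. *)

lemma abs_quotient_le_S1_term:
  fixes c p1 p2 q1 q2 a1 a2 :: real
  assumes a: "2/3 \<le> a1" "4/3 \<le> a2" and q: "0 < q1" "0 < q2"
    and p: "(real k + a1) / a1 * q1 \<le> p1" "(real k + a2) / a2 * q2 \<le> p2"
  shows "\<bar>c / (p1 * p2)\<bar> \<le> 9 * a1 * a2 * \<bar>c / (q1 * q2)\<bar> * S1_term k"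
proof -
  let ?x = "real k"
  define u v where "u = (?x + a1) / a1 * q1" and "v = (?x + a2) / a2 * q2"
  have uv: "0 < u" "0 < v" using a q by (simp_all add: u_def v_def add_pos_nonneg)
  have "u \<le> p1" "v \<le> p2" using p by (simp_all add: u_def v_def)
  then have "u * v \<le> p1 * p2" "0 < p1 * p2"
    using uv by (simp_all add: mult_mono)
  then have "\<bar>c / (p1 * p2)\<bar> = \<bar>c\<bar> / (p1 * p2)"
    by (simp add: abs_divide)
  also have "\<dots> \<le> \<bar>c\<bar> / (u * v)"
    using uv \<open>u * v \<le> p1 * p2\<close> \<open>0 < p1 * p2\<close> by (intro divide_left_mono) simp_all
  also have "\<dots> = a1 * a2 * \<bar>c / (q1 * q2)\<bar> / ((?x + a1) * (?x + a2))"
    using a q by (simp add: u_def v_def abs_divide field_simps)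
  also have "\<dots> \<le> a1 * a2 * \<bar>c / (q1 * q2)\<bar> / ((?x + 2/3) * (?x + 4/3))"
    using a q by (intro divide_left_mono) (auto intro!: mult_mono)
  also have "\<dots> = 9 * a1 * a2 * \<bar>c / (q1 * q2)\<bar> * S1_term k"
    by (simp add: S1_term_def field_simps)
  finally show ?thesis .
qed

lemma central_binomial_Suc:
  "real ((2 * Suc m) choose Suc m) = real ((2 * m) choose m) * (2 * (2 * real m + 1) / (real m + 1))"
proof -
  have step_odd: "Suc (Suc (2*m)) * (Suc (2*m) choose m) = (Suc (Suc (2*m)) choose Suc m) * Suc m"
    by (rule Suc_times_binomial_eq)
  have step_even: "Suc (2*m) * ((2*m) choose m) = (Suc (2*m) choose Suc m) * Suc m"
    by (rule Suc_times_binomial_eq)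
  have symm: "Suc (2*m) choose Suc m = Suc (2*m) choose m"
    using binomial_symmetric[of "Suc m" "Suc (2*m)"] by simp
  have "((2 * Suc m) choose Suc m) * Suc m * Suc m = Suc (Suc (2*m)) * (Suc (2*m) choose m) * Suc m"
    using step_odd by simp
  also have "\<dots> = Suc (Suc (2*m)) * ((Suc (2*m) choose Suc m) * Suc m)"
    by (simp only: symm mult.assoc)
  also have "\<dots> = 2 * (2*m + 1) * ((2*m) choose m) * Suc m"
    by (simp only: step_even[symmetric]) (simp add: algebra_simps)
  finally have nat_eq: "((2 * Suc m) choose Suc m) * Suc m = 2 * (2*m + 1) * ((2*m) choose m)"
    by (simp only: mult_cancel2) simp
  have "real ((2 * Suc m) choose Suc m) * (real m + 1) = 2 * (2 * real m + 1) * real ((2*m) choose m)"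
    using arg_cong[OF nat_eq, of real] by (simp add: algebra_simps del: binomial_Suc_Suc)
  then show ?thesis by (simp add: field_simps del: binomial_Suc_Suc)
qed

section \<open>The five WZ pairs\<close>

(*
  For i = 2, ..., 6, Ti is the summand of the i-th series of the theorem, Fi the WZ kernel
  with Fi 0 = S1_term, rhoi and sigi its term ratios in n and in k, Ri the certificate, and qi
  the common term ratio of Ti n and Ri n 0 * Fi n 0.
*)

definition C2 :: "nat \<Rightarrow> real" where
  "C2 n = pochhammer 1 n * pochhammer (5/3) n * pochhammer (1/3) n / (9 * pochhammer (1/2) n * 4 ^ n)"

definition F2 :: "nat \<Rightarrow> nat \<Rightarrow> real" where
  "F2 n k = C2 n / (pochhammer (real k + 2/3) (Suc n) * pochhammer (real k + 4/3) (Suc n))"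

definition sig2 :: "nat \<Rightarrow> nat \<Rightarrow> real" where
  "sig2 n k = (real k + 2/3) / (real k + real n + 5/3) * ((real k + 4/3) / (real k + real n + 7/3))"

definition rho2 :: "nat \<Rightarrow> nat \<Rightarrow> real" where
  "rho2 n k = (real n + 1) * (real n + 5/3) * (real n + 1/3) / (4 * (real n + 1/2))
     / ((real k + real n + 5/3) * (real k + real n + 7/3))"

definition R2 :: "nat \<Rightarrow> nat \<Rightarrow> real" where
  "R2 n k = (2 * real k + 3 * real n + 3) / (2 * (2 * real n + 1))"

definition T2 :: "nat \<Rightarrow> real" where
  "T2 n = 1 / ((3 * real n + 1) * (3 * real n + 4) * real ((2*n+2) choose (n+1)))"

definition q2 :: "nat \<Rightarrow> real" where
  "q2 n = (3 * real n + 1) * (real n + 2) / (2 * (3 * real n + 7) * (2 * real n + 3))"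

lemma C2_Suc: "C2 (Suc n) = (real n + 1) * (real n + 5/3) * (real n + 1/3) / (4 * (real n + 1/2)) * C2 n"
proof -
  have "0 < pochhammer (1/2::real) n" "0 < real n + 1/2" by (simp_all add: pochhammer_pos add_pos_nonneg)
  then show ?thesis unfolding C2_def pochhammer_Suc by (simp add: divide_simps) (simp add: algebra_simps)
qed

lemma F2_0: "F2 0 k = S1_term k"
  by (simp add: F2_def C2_def S1_term_def field_simps)

lemma F2_sig: "F2 n (Suc k) = sig2 n k * F2 n k"
proof -
  have "real (Suc k) + 2/3 = (real k + 2/3) + 1" "real (Suc k) + 4/3 = (real k + 4/3) + 1"
    by simp_all
  then show ?thesis unfolding F2_def sig2_def
    by (simp only:) (subst quotient_pochhammer_shift; simp add: add_pos_nonneg algebra_simps)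
qed

lemma F2_rho: "F2 (Suc n) k = rho2 n k * F2 n k"
proof -
  define a b where "a = real k + 2/3" and "b = real k + 4/3"
  have "0 < a" "0 < b" by (simp_all add: a_def b_def add_pos_nonneg)
  then have pos: "0 < pochhammer a (Suc n)" "0 < pochhammer b (Suc n)"
    "0 < a + real (Suc n)" "0 < b + real (Suc n)" "0 < real n + 1/2"
    by (simp_all add: pochhammer_pos add_pos_nonneg)
  have eqs: "F2 (Suc n) k = (real n + 1) * (real n + 5/3) * (real n + 1/3) / (4 * (real n + 1/2)) * C2 n /
      (pochhammer a (Suc n) * (a + real (Suc n)) * (pochhammer b (Suc n) * (b + real (Suc n))))"
    "F2 n k = C2 n / (pochhammer a (Suc n) * pochhammer b (Suc n))"
    "rho2 n k = (real n + 1) * (real n + 5/3) * (real n + 1/3) / (4 * (real n + 1/2))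
      / ((a + real (Suc n)) * (b + real (Suc n)))"
    unfolding F2_def rho2_def a_def[symmetric] b_def[symmetric]
    by (simp_all only: C2_Suc pochhammer_Suc[of _ "Suc n"]) (simp add: a_def b_def algebra_simps)
  show ?thesis unfolding eqs using pos by (simp add: divide_simps)
qed

lemma R2_certificate: "rho2 n k - 1 = R2 n (Suc k) * sig2 n k - R2 n k"
proof -
  have "0 < real k + real n + 5/3" "0 < real k + real n + 7/3" "0 < real n + 1/2" "0 < 2 * real n + 1"
    by (simp_all add: add_pos_nonneg)
  then show ?thesis unfolding rho2_def R2_def sig2_def by (simp add: divide_simps) algebra
qed

lemma F2_bound: "\<bar>F2 n k\<bar> \<le> 8 * \<bar>F2 n 0\<bar> * S1_term k"
proof -
  have "(real k + 2/3) / (2/3) * pochhammer (2/3) (Suc n) \<le> pochhammer (real k + 2/3) (Suc n)"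
    "(real k + 4/3) / (4/3) * pochhammer (4/3) (Suc n) \<le> pochhammer (real k + 4/3) (Suc n)"
    by (simp_all only: pochhammer_shift_ge)
  from abs_quotient_le_S1_term[OF _ _ _ _ this, of "C2 n"] show ?thesis
    by (simp add: F2_def pochhammer_pos)
qed

lemma F2_bound_LIMSEQ: "(\<lambda>n. 8 * \<bar>F2 n 0\<bar>) \<longlonglongrightarrow> 0"
proof (rule LIMSEQ_zero_by_ratio)
  show "8 * \<bar>F2 (Suc n) 0\<bar> = \<bar>rho2 n 0\<bar> * (8 * \<bar>F2 n 0\<bar>)" for n
    by (simp add: F2_rho abs_mult)
  show "(\<lambda>n. \<bar>rho2 n 0\<bar>) \<longlonglongrightarrow> 1/4"
    unfolding rho2_def by simp real_asymp
qed simp_all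

lemma R2_S1_term_LIMSEQ: "(\<lambda>k. R2 n k * S1_term k) \<longlonglongrightarrow> 0"
  unfolding R2_def S1_term_def by real_asymp

lemma T2_Suc: "T2 (Suc n) = T2 n * q2 n"
proof -
  define c where "c = real ((2*n+2) choose (n+1))"
  have "0 < c" by (simp add: c_def del: binomial_Suc_Suc)
  have "real ((2 * Suc n + 2) choose (Suc n + 1)) = c * (2 * (2 * real n + 3) / (real n + 2))"
    using central_binomial_Suc[of "n+1"] by (simp add: c_def algebra_simps del: binomial_Suc_Suc)
  then have T2_eqs: "T2 (Suc n) = 1 / ((3 * real (Suc n) + 1) * (3 * real (Suc n) + 4)
      * (c * (2 * (2 * real n + 3) / (real n + 2))))"
    "T2 n = 1 / ((3 * real n + 1) * (3 * real n + 4) * c)"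
    unfolding T2_def c_def by simp_all
  show ?thesis using \<open>0 < c\<close>
    unfolding T2_eqs q2_def by (simp add: divide_simps) (simp add: algebra_simps)
qed

lemma R2_term_ratio: "R2 (Suc n) 0 * rho2 n 0 = R2 n 0 * q2 n"
proof -
  have "0 < real n + 5/3" "0 < real n + 7/3" "0 < real n + 1/2" "0 < 2 * real n + 1"
    "0 < 2 * real n + 3" "0 < 3 * real n + 7"
    by (simp_all add: add_pos_nonneg)
  then show ?thesis unfolding rho2_def R2_def q2_def by (simp add: divide_simps) algebra
qed

lemma T2_sums: "T2 sums (2/3 * (1/2 - sqrt 3 * pi / 18))"
proof (rule sums_by_equal_term_ratios)
  show "(\<lambda>n. R2 n 0 * F2 n 0) sums (1/2 - sqrt 3 * pi / 18)"
    by (rule wz_sums_by_certificate[OF S1_sums S1_term_nonneg F2_0 F2_rho F2_sig R2_certificate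
          F2_bound F2_bound_LIMSEQ R2_S1_term_LIMSEQ])
  show "T2 0 = 2/3 * (R2 0 0 * F2 0 0)" by (simp add: T2_def R2_def F2_def C2_def)
  show "T2 (Suc n) = T2 n * q2 n" for n by (rule T2_Suc)
  show "R2 (Suc n) 0 * F2 (Suc n) 0 = R2 n 0 * F2 n 0 * q2 n" for n
    using R2_term_ratio[of n] by (simp add: F2_rho)
qed

definition F3 :: "nat \<Rightarrow> nat \<Rightarrow> real" where
  "F3 n k = pochhammer (1/3) n / 9 / (pochhammer (real k + real n + 2/3) (Suc n) * (real k + real n + 4/3))"

definition sig3 :: "nat \<Rightarrow> nat \<Rightarrow> real" where
  "sig3 n k = (real k + real n + 2/3) / (real k + 2 * real n + 5/3)
     * ((real k + real n + 4/3) / (real k + real n + 7/3))"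

definition rho3 :: "nat \<Rightarrow> nat \<Rightarrow> real" where
  "rho3 n k = (real n + 1/3)
     * ((real k + real n + 2/3) / ((real k + 2 * real n + 5/3) * (real k + 2 * real n + 8/3)))
     * ((real k + real n + 4/3) / (real k + real n + 7/3))"

definition R3 :: "nat \<Rightarrow> nat \<Rightarrow> real" where
  "R3 n k = (3 * real n ^ 2 + 3 * real n * real k + real k ^ 2 + 17/3 * real n + 3 * real k + 23/9)
     / ((real k + 2 * real n + 5/3) * (real n + 1))"

definition T3 :: "nat \<Rightarrow> real" where
  "T3 n = (27 * real n ^ 2 + 51 * real n + 23) * pochhammer (2/3) n
     / ((3 * real n + 1) * (3 * real n + 4) * (real n + 1) * pochhammer (11/6) n) * (1 / 4 ^ n)"

definition q3 :: "nat \<Rightarrow> real" where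
  "q3 n = (27 * (real n + 1) ^ 2 + 51 * (real n + 1) + 23) / (27 * real n ^ 2 + 51 * real n + 23)
     * ((3 * real n + 1) * (real n + 1) / ((3 * real n + 7) * (real n + 2)))
     * ((real n + 2/3) / (4 * (real n + 11/6)))"

lemma F3_0: "F3 0 k = S1_term k"
  by (simp add: F3_def S1_term_def field_simps)

lemma F3_sig: "F3 n (Suc k) = sig3 n k * F3 n k"
proof -
  have "real (Suc k) + real n + 2/3 = (real k + real n + 2/3) + 1"
    "real (Suc k) + real n + 4/3 = (real k + real n + 4/3) + 1" by simp_all
  then show ?thesis unfolding F3_def sig3_def
    by (simp only:) (subst quotient_pochhammer_linear_shift; simp add: add_pos_nonneg algebra_simps)
qed

lemma F3_rho: "F3 (Suc n) k = rho3 n k * F3 n k"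
proof -
  define a b where "a = real k + real n + 2/3" and "b = real k + real n + 4/3"
  have "0 < a" "0 < b" by (simp_all add: a_def b_def add_pos_nonneg)
  then have pos: "0 < pochhammer a (Suc n)" "0 < a + real (Suc n)" "0 < a + real (Suc (Suc n))" "0 < b + 1"
    by (simp_all add: pochhammer_pos)
  have "real k + real (Suc n) + 2/3 = a + 1" "real k + real (Suc n) + 4/3 = b + 1"
    by (simp_all add: a_def b_def)
  then have eqs: "F3 (Suc n) k = pochhammer (1/3) n * (1/3 + real n) / 9 /
      (pochhammer a (Suc n) * (a + real (Suc n)) * (a + real (Suc (Suc n))) / a * (b + 1))"
    "F3 n k = pochhammer (1/3) n / 9 / (pochhammer a (Suc n) * b)"
    "rho3 n k = (real n + 1/3) * a / ((a + real (Suc n)) * (a + real (Suc (Suc n)))) * (b / (b + 1))"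
    using \<open>0 < a\<close> unfolding F3_def rho3_def
    by (simp_all only: pochhammer_add_one pochhammer_Suc[of a "Suc n"] pochhammer_Suc[of "1/3" n])
      (simp_all add: a_def b_def algebra_simps)
  show ?thesis unfolding eqs using pos \<open>0 < a\<close> \<open>0 < b\<close> by (simp add: divide_simps)
qed

lemma R3_certificate: "rho3 n k - 1 = R3 n (Suc k) * sig3 n k - R3 n k"
proof -
  have "0 < real k + 2 * real n + 5/3" "0 < real k + 2 * real n + 8/3" "0 < real k + real n + 7/3"
    "0 < real n + 1"
    by (simp_all add: add_pos_nonneg)
  then show ?thesis unfolding rho3_def R3_def sig3_def by (simp add: divide_simps) algebra
qed

lemma F3_bound: "\<bar>F3 n k\<bar> \<le> 9 * (real n + 2/3) * (real n + 4/3) * \<bar>F3 n 0\<bar> * S1_term k"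
proof -
  have "(real k + (real n + 2/3)) / (real n + 2/3) * pochhammer (real n + 2/3) (Suc n)
      \<le> pochhammer (real k + (real n + 2/3)) (Suc n)"
    by (rule pochhammer_shift_ge) simp_all
  moreover have "(real k + (real n + 4/3)) / (real n + 4/3) * (real n + 4/3) \<le> real k + (real n + 4/3)"
    by simp
  ultimately have "\<bar>pochhammer (1/3) n / 9
      / (pochhammer (real k + (real n + 2/3)) (Suc n) * (real k + (real n + 4/3)))\<bar>
    \<le> 9 * (real n + 2/3) * (real n + 4/3)
      * \<bar>pochhammer (1/3) n / 9 / (pochhammer (real n + 2/3) (Suc n) * (real n + 4/3))\<bar> * S1_term k"
    by (intro abs_quotient_le_S1_term) (simp_all add: pochhammer_pos add_pos_nonneg)
  then show ?thesis by (simp add: F3_def add.assoc)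
qed

lemma F3_bound_LIMSEQ: "(\<lambda>n. 9 * (real n + 2/3) * (real n + 4/3) * \<bar>F3 n 0\<bar>) \<longlonglongrightarrow> 0"
proof (rule LIMSEQ_zero_by_ratio)
  show "9 * (real (Suc n) + 2/3) * (real (Suc n) + 4/3) * \<bar>F3 (Suc n) 0\<bar>
      = (real n + 5/3) * (real n + 7/3) / ((real n + 2/3) * (real n + 4/3)) * \<bar>rho3 n 0\<bar>
        * (9 * (real n + 2/3) * (real n + 4/3) * \<bar>F3 n 0\<bar>)" for n
    by (simp add: F3_rho abs_mult divide_simps add_pos_nonneg) (simp add: algebra_simps)
  show "(\<lambda>n. (real n + 5/3) * (real n + 7/3) / ((real n + 2/3) * (real n + 4/3)) * \<bar>rho3 n 0\<bar>) \<longlonglongrightarrow> 1/4"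
    unfolding rho3_def by simp real_asymp
qed simp_all

lemma R3_S1_term_LIMSEQ: "(\<lambda>k. R3 n k * S1_term k) \<longlonglongrightarrow> 0"
  unfolding R3_def S1_term_def by real_asymp

lemma T3_Suc: "T3 (Suc n) = T3 n * q3 n"
proof -
  have "0 < pochhammer (11/6::real) n" "0 < pochhammer (2/3::real) n" "0 < real n + 11/6"
    "0 < 27 * real n ^ 2 + 51 * real n + 23" "0 < 3 * real n + 7"
    by (simp_all add: pochhammer_pos add_pos_nonneg add_nonneg_pos)
  then show ?thesis unfolding T3_def q3_def pochhammer_Suc
    by (simp add: divide_simps) (simp add: algebra_simps)
qed

lemma R3_term_ratio: "R3 (Suc n) 0 * rho3 n 0 = R3 n 0 * q3 n"
proof -
  have "0 < 2 * real n + 5/3" "0 < 2 * real n + 8/3" "0 < real n + 7/3" "0 < real n + 11/6"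
    "0 < 2 * real n + 11/3" "0 < 27 * real n ^ 2 + 51 * real n + 23" "0 < 3 * real n + 7"
    by (simp_all add: add_pos_nonneg add_nonneg_pos)
  then show ?thesis unfolding rho3_def R3_def q3_def by (simp add: divide_simps) algebra
qed

lemma T3_sums: "T3 sums (30 * (1/2 - sqrt 3 * pi / 18))"
proof (rule sums_by_equal_term_ratios)
  show "(\<lambda>n. R3 n 0 * F3 n 0) sums (1/2 - sqrt 3 * pi / 18)"
    by (rule wz_sums_by_certificate[OF S1_sums S1_term_nonneg F3_0 F3_rho F3_sig R3_certificate
          F3_bound F3_bound_LIMSEQ R3_S1_term_LIMSEQ])
  show "T3 0 = 30 * (R3 0 0 * F3 0 0)" by (simp add: T3_def R3_def F3_def)
  show "T3 (Suc n) = T3 n * q3 n" for n by (rule T3_Suc)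
  show "R3 (Suc n) 0 * F3 (Suc n) 0 = R3 n 0 * F3 n 0 * q3 n" for n
    using R3_term_ratio[of n] by (simp add: F3_rho)
qed

definition F4 :: "nat \<Rightarrow> nat \<Rightarrow> real" where
  "F4 n k = C2 n / (pochhammer (real k + real n + 2/3) (Suc n) * pochhammer (real k + real n + 4/3) (Suc n))"

definition sig4 :: "nat \<Rightarrow> nat \<Rightarrow> real" where
  "sig4 n k = (real k + real n + 2/3) / (real k + 2 * real n + 5/3)
     * ((real k + real n + 4/3) / (real k + 2 * real n + 7/3))"

definition rho4 :: "nat \<Rightarrow> nat \<Rightarrow> real" where
  "rho4 n k = (real n + 1) * (real n + 5/3) * (real n + 1/3) / (4 * (real n + 1/2))
     * ((real k + real n + 2/3) / ((real k + 2 * real n + 5/3) * (real k + 2 * real n + 8/3)))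
     * ((real k + real n + 4/3) / ((real k + 2 * real n + 7/3) * (real k + 2 * real n + 10/3)))"

definition R4 :: "nat \<Rightarrow> nat \<Rightarrow> real" where
  "R4 n k = (55/9 + 89/9 * real k + 11/2 * real k ^ 2 + real k ^ 3 + 23 * real n + 24 * real n * real k
      + 13/2 * real n * real k ^ 2 + 55/2 * real n ^ 2 + 14 * real n ^ 2 * real k + 21/2 * real n ^ 3)
     / ((real k + 2 * real n + 5/3) * (real k + 2 * real n + 7/3) * (2 * real n + 1))"

definition T4 :: "nat \<Rightarrow> real" where
  "T4 n = (189 * real n ^ 3 + 495 * real n ^ 2 + 414 * real n + 110)
     / ((6 * real n + 1) * (6 * real n + 7) * (6 * real n + 5) * (2 * real n + 1))
     * (1 / real ((6*n) choose (3*n)))"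

definition q4 :: "nat \<Rightarrow> real" where
  "q4 n = (189 * (real n + 1) ^ 3 + 495 * (real n + 1) ^ 2 + 414 * (real n + 1) + 110)
       / (189 * real n ^ 3 + 495 * real n ^ 2 + 414 * real n + 110)
     * ((6 * real n + 1) * (6 * real n + 5) * (2 * real n + 1)
        / ((6 * real n + 13) * (6 * real n + 11) * (2 * real n + 3)))
     * ((3 * real n + 1) * (3 * real n + 2) * (3 * real n + 3)
        / (8 * (6 * real n + 1) * (6 * real n + 3) * (6 * real n + 5)))"

lemma F4_0: "F4 0 k = S1_term k"
  by (simp add: F4_def C2_def S1_term_def field_simps)

lemma F4_sig: "F4 n (Suc k) = sig4 n k * F4 n k"
proof -
  have "real (Suc k) + real n + 2/3 = (real k + real n + 2/3) + 1"
    "real (Suc k) + real n + 4/3 = (real k + real n + 4/3) + 1" by simp_all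
  then show ?thesis unfolding F4_def sig4_def
    by (simp only:) (subst quotient_pochhammer_shift; simp add: add_pos_nonneg algebra_simps)
qed

lemma F4_rho: "F4 (Suc n) k = rho4 n k * F4 n k"
proof -
  define a b where "a = real k + real n + 2/3" and "b = real k + real n + 4/3"
  have "0 < a" "0 < b" by (simp_all add: a_def b_def add_pos_nonneg)
  then have pos: "0 < pochhammer a (Suc n)" "0 < pochhammer b (Suc n)"
    "0 < a + real (Suc n)" "0 < a + real (Suc (Suc n))" "0 < b + real (Suc n)" "0 < b + real (Suc (Suc n))"
    "0 < real n + 1/2"
    by (simp_all add: pochhammer_pos add_pos_nonneg)
  have "real k + real (Suc n) + 2/3 = a + 1" "real k + real (Suc n) + 4/3 = b + 1"
    by (simp_all add: a_def b_def)
  then have eqs: "F4 (Suc n) k = (real n + 1) * (real n + 5/3) * (real n + 1/3) / (4 * (real n + 1/2)) * C2 n /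
      (pochhammer a (Suc n) * (a + real (Suc n)) * (a + real (Suc (Suc n))) / a
       * (pochhammer b (Suc n) * (b + real (Suc n)) * (b + real (Suc (Suc n))) / b))"
    "F4 n k = C2 n / (pochhammer a (Suc n) * pochhammer b (Suc n))"
    "rho4 n k = (real n + 1) * (real n + 5/3) * (real n + 1/3) / (4 * (real n + 1/2))
      * (a / ((a + real (Suc n)) * (a + real (Suc (Suc n)))))
      * (b / ((b + real (Suc n)) * (b + real (Suc (Suc n)))))"
    using \<open>0 < a\<close> \<open>0 < b\<close> unfolding F4_def rho4_def
    by (simp_all only: C2_Suc pochhammer_add_one pochhammer_Suc[of a "Suc n"] pochhammer_Suc[of b "Suc n"]
        less_irrefl not_False_eq_True)
      (simp_all add: a_def b_def algebra_simps)
  show ?thesis unfolding eqs using pos \<open>0 < a\<close> \<open>0 < b\<close> by (simp add: divide_simps)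
qed

lemma R4_certificate: "rho4 n k - 1 = R4 n (Suc k) * sig4 n k - R4 n k"
proof -
  have "0 < real k + 2 * real n + 5/3" "0 < real k + 2 * real n + 7/3" "0 < real k + 2 * real n + 8/3"
    "0 < real k + 2 * real n + 10/3" "0 < real n + 1/2" "0 < 2 * real n + 1"
    by (simp_all add: add_pos_nonneg)
  then show ?thesis unfolding rho4_def R4_def sig4_def by (simp add: divide_simps) algebra
qed

lemma F4_bound: "\<bar>F4 n k\<bar> \<le> 9 * (real n + 2/3) * (real n + 4/3) * \<bar>F4 n 0\<bar> * S1_term k"
proof -
  have "(real k + (real n + 2/3)) / (real n + 2/3) * pochhammer (real n + 2/3) (Suc n)
      \<le> pochhammer (real k + (real n + 2/3)) (Suc n)"
    "(real k + (real n + 4/3)) / (real n + 4/3) * pochhammer (real n + 4/3) (Suc n)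
      \<le> pochhammer (real k + (real n + 4/3)) (Suc n)"
    by (rule pochhammer_shift_ge; simp)+
  from abs_quotient_le_S1_term[OF _ _ _ _ this, of "C2 n"] show ?thesis
    by (simp add: F4_def pochhammer_pos add_pos_nonneg add.assoc)
qed

lemma F4_bound_LIMSEQ: "(\<lambda>n. 9 * (real n + 2/3) * (real n + 4/3) * \<bar>F4 n 0\<bar>) \<longlonglongrightarrow> 0"
proof (rule LIMSEQ_zero_by_ratio)
  show "9 * (real (Suc n) + 2/3) * (real (Suc n) + 4/3) * \<bar>F4 (Suc n) 0\<bar>
      = (real n + 5/3) * (real n + 7/3) / ((real n + 2/3) * (real n + 4/3)) * \<bar>rho4 n 0\<bar>
        * (9 * (real n + 2/3) * (real n + 4/3) * \<bar>F4 n 0\<bar>)" for n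
    by (simp add: F4_rho abs_mult divide_simps add_pos_nonneg) (simp add: algebra_simps)
  show "(\<lambda>n. (real n + 5/3) * (real n + 7/3) / ((real n + 2/3) * (real n + 4/3)) * \<bar>rho4 n 0\<bar>) \<longlonglongrightarrow> 1/64"
    unfolding rho4_def by simp real_asymp
qed simp_all

lemma R4_S1_term_LIMSEQ: "(\<lambda>k. R4 n k * S1_term k) \<longlonglongrightarrow> 0"
  unfolding R4_def S1_term_def by real_asymp

lemma T4_Suc: "T4 (Suc n) = T4 n * q4 n"
proof -
  define c where "c = real ((6*n) choose (3*n))"
  have "0 < c" by (simp add: c_def del: binomial_Suc_Suc)
  have index_eqs: "6 * Suc n = 2 * Suc (Suc (Suc (3*n)))" "3 * Suc n = Suc (Suc (Suc (3*n)))"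
    by simp_all
  have "real ((6 * Suc n) choose (3 * Suc n)) = c * (8 * (6 * real n + 1) * (6 * real n + 3) * (6 * real n + 5)
      / ((3 * real n + 1) * (3 * real n + 2) * (3 * real n + 3)))"
    unfolding index_eqs central_binomial_Suc c_def
    by (simp add: divide_simps add_pos_nonneg del: binomial_Suc_Suc) (simp add: algebra_simps)
  then have eqs: "T4 (Suc n) = (189 * real (Suc n) ^ 3 + 495 * real (Suc n) ^ 2 + 414 * real (Suc n) + 110)
     / ((6 * real (Suc n) + 1) * (6 * real (Suc n) + 7) * (6 * real (Suc n) + 5) * (2 * real (Suc n) + 1))
     * (1 / (c * (8 * (6 * real n + 1) * (6 * real n + 3) * (6 * real n + 5)
      / ((3 * real n + 1) * (3 * real n + 2) * (3 * real n + 3)))))"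
    "T4 n = (189 * real n ^ 3 + 495 * real n ^ 2 + 414 * real n + 110)
     / ((6 * real n + 1) * (6 * real n + 7) * (6 * real n + 5) * (2 * real n + 1)) * (1 / c)"
    unfolding T4_def c_def by simp_all
  have "0 < 189 * real n ^ 3 + 495 * real n ^ 2 + 414 * real n + 110"
    by (intro add_nonneg_pos add_nonneg_nonneg mult_nonneg_nonneg) simp_all
  then show ?thesis using \<open>0 < c\<close>
    unfolding eqs q4_def by (simp add: divide_simps add_pos_nonneg) (simp add: algebra_simps)
qed

lemma R4_term_ratio: "R4 (Suc n) 0 * rho4 n 0 = R4 n 0 * q4 n"
proof -
  have "0 < 189 * real n ^ 3 + 495 * real n ^ 2 + 414 * real n + 110"
    by (intro add_nonneg_pos add_nonneg_nonneg mult_nonneg_nonneg) simp_all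
  moreover have "0 < 2 * real n + 5/3" "0 < 2 * real n + 7/3" "0 < 2 * real n + 8/3" "0 < 2 * real n + 10/3"
    "0 < 2 * real n + 11/3" "0 < 2 * real n + 13/3" "0 < real n + 1/2" "0 < 2 * real n + 1" "0 < 2 * real n + 3"
    "0 < 6 * real n + 1" "0 < 6 * real n + 3" "0 < 6 * real n + 5" "0 < 6 * real n + 11" "0 < 6 * real n + 13"
    by (simp_all add: add_pos_nonneg)
  ultimately show ?thesis unfolding rho4_def R4_def q4_def by (simp add: divide_simps) algebra
qed

lemma T4_sums: "T4 sums (16 * (1/2 - sqrt 3 * pi / 18))"
proof (rule sums_by_equal_term_ratios)
  show "(\<lambda>n. R4 n 0 * F4 n 0) sums (1/2 - sqrt 3 * pi / 18)"
    by (rule wz_sums_by_certificate[OF S1_sums S1_term_nonneg F4_0 F4_rho F4_sig R4_certificate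
          F4_bound F4_bound_LIMSEQ R4_S1_term_LIMSEQ])
  show "T4 0 = 16 * (R4 0 0 * F4 0 0)" by (simp add: T4_def R4_def F4_def C2_def)
  show "T4 (Suc n) = T4 n * q4 n" for n by (rule T4_Suc)
  show "R4 (Suc n) 0 * F4 (Suc n) 0 = R4 n 0 * F4 n 0 * q4 n" for n
    using R4_term_ratio[of n] by (simp add: F4_rho)
qed

definition F5 :: "nat \<Rightarrow> nat \<Rightarrow> real" where
  "F5 n k = (-1) ^ n * pochhammer (5/3) n / 9
     / (pochhammer (real k + real n + 2/3) (Suc n) * (real k + 2 * real n + 4/3))"

definition sig5 :: "nat \<Rightarrow> nat \<Rightarrow> real" where
  "sig5 n k = (real k + real n + 2/3) / (real k + 2 * real n + 5/3)
     * ((real k + 2 * real n + 4/3) / (real k + 2 * real n + 7/3))"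

definition rho5 :: "nat \<Rightarrow> nat \<Rightarrow> real" where
  "rho5 n k = - (real n + 5/3)
     * ((real k + real n + 2/3) / ((real k + 2 * real n + 5/3) * (real k + 2 * real n + 8/3)))
     * ((real k + 2 * real n + 4/3) / (real k + 2 * real n + 10/3))"

definition R5 :: "nat \<Rightarrow> nat \<Rightarrow> real" where
  "R5 n k = (185/27 + 104/9 * real k + 19/3 * real k ^ 2 + real k ^ 3 + 211/9 * real n + 80/3 * real n * real k
      + 7 * real n * real k ^ 2 + 80/3 * real n ^ 2 + 15 * real n ^ 2 * real k + 10 * real n ^ 3)
     / ((real k + 2 * real n + 5/3) * (real k + 2 * real n + 7/3) * (real n + 1))"

definition T5 :: "nat \<Rightarrow> real" where
  "T5 n = (270 * real n ^ 3 + 720 * real n ^ 2 + 633 * real n + 185) / ((real n + 1) * (6 * real n + 7))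
     * (pochhammer (2/3) n ^ 2 / (pochhammer (4/3) n * pochhammer (11/6) n)) * (1 / (-4) ^ n)"

definition q5 :: "nat \<Rightarrow> real" where
  "q5 n = (270 * (real n + 1) ^ 3 + 720 * (real n + 1) ^ 2 + 633 * (real n + 1) + 185)
       / (270 * real n ^ 3 + 720 * real n ^ 2 + 633 * real n + 185)
     * ((real n + 1) * (6 * real n + 7) / ((real n + 2) * (6 * real n + 13)))
     * ((real n + 2/3) ^ 2 / ((real n + 4/3) * (real n + 11/6))) * (- 1/4)"

lemma F5_0: "F5 0 k = S1_term k"
  by (simp add: F5_def S1_term_def field_simps)

lemma F5_sig: "F5 n (Suc k) = sig5 n k * F5 n k"
proof -
  have "real (Suc k) + real n + 2/3 = (real k + real n + 2/3) + 1"
    "real (Suc k) + 2 * real n + 4/3 = (real k + 2 * real n + 4/3) + 1" by simp_all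
  then show ?thesis unfolding F5_def sig5_def
    by (simp only:) (subst quotient_pochhammer_linear_shift; simp add: add_pos_nonneg algebra_simps)
qed

lemma F5_rho: "F5 (Suc n) k = rho5 n k * F5 n k"
proof -
  define a b where "a = real k + real n + 2/3" and "b = real k + 2 * real n + 4/3"
  have "0 < a" "0 < b" by (simp_all add: a_def b_def add_pos_nonneg)
  then have pos: "0 < pochhammer a (Suc n)" "0 < a + real (Suc n)" "0 < a + real (Suc (Suc n))" "0 < b + 2"
    by (simp_all add: pochhammer_pos)
  have "real k + real (Suc n) + 2/3 = a + 1" "real k + 2 * real (Suc n) + 4/3 = b + 2"
    by (simp_all add: a_def b_def)
  then have eqs: "F5 (Suc n) k = - ((-1) ^ n * (pochhammer (5/3) n * (5/3 + real n))) / 9 /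
      (pochhammer a (Suc n) * (a + real (Suc n)) * (a + real (Suc (Suc n))) / a * (b + 2))"
    "F5 n k = (-1) ^ n * pochhammer (5/3) n / 9 / (pochhammer a (Suc n) * b)"
    "rho5 n k = - (real n + 5/3) * (a / ((a + real (Suc n)) * (a + real (Suc (Suc n))))) * (b / (b + 2))"
    using \<open>0 < a\<close> unfolding F5_def rho5_def
    by (simp_all only: pochhammer_add_one pochhammer_Suc[of a "Suc n"] pochhammer_Suc[of "5/3" n])
      (simp_all add: a_def b_def algebra_simps)
  show ?thesis unfolding eqs using pos \<open>0 < a\<close> \<open>0 < b\<close> by (simp add: divide_simps)
qed

lemma R5_certificate: "rho5 n k - 1 = R5 n (Suc k) * sig5 n k - R5 n k"
proof -
  have "0 < real k + 2 * real n + 5/3" "0 < real k + 2 * real n + 7/3" "0 < real k + 2 * real n + 8/3"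
    "0 < real k + 2 * real n + 10/3" "0 < real n + 1"
    by (simp_all add: add_pos_nonneg)
  then show ?thesis unfolding rho5_def R5_def sig5_def by (simp add: divide_simps) algebra
qed

lemma F5_bound: "\<bar>F5 n k\<bar> \<le> 9 * (real n + 2/3) * (2 * real n + 4/3) * \<bar>F5 n 0\<bar> * S1_term k"
proof -
  have "(real k + (real n + 2/3)) / (real n + 2/3) * pochhammer (real n + 2/3) (Suc n)
      \<le> pochhammer (real k + (real n + 2/3)) (Suc n)"
    by (rule pochhammer_shift_ge) simp_all
  moreover have "(real k + (2 * real n + 4/3)) / (2 * real n + 4/3) * (2 * real n + 4/3) \<le> real k + (2 * real n + 4/3)"
    by simp
  ultimately have "\<bar>(-1) ^ n * pochhammer (5/3) n / 9
      / (pochhammer (real k + (real n + 2/3)) (Suc n) * (real k + (2 * real n + 4/3)))\<bar>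
    \<le> 9 * (real n + 2/3) * (2 * real n + 4/3) * \<bar>(-1) ^ n * pochhammer (5/3) n / 9
      / (pochhammer (real n + 2/3) (Suc n) * (2 * real n + 4/3))\<bar> * S1_term k"
    by (intro abs_quotient_le_S1_term) (simp_all add: pochhammer_pos add_pos_nonneg)
  then show ?thesis by (simp add: F5_def add.assoc)
qed

lemma F5_bound_LIMSEQ: "(\<lambda>n. 9 * (real n + 2/3) * (2 * real n + 4/3) * \<bar>F5 n 0\<bar>) \<longlonglongrightarrow> 0"
proof (rule LIMSEQ_zero_by_ratio)
  show "9 * (real (Suc n) + 2/3) * (2 * real (Suc n) + 4/3) * \<bar>F5 (Suc n) 0\<bar>
      = (real n + 5/3) * (2 * real n + 10/3) / ((real n + 2/3) * (2 * real n + 4/3)) * \<bar>rho5 n 0\<bar>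
        * (9 * (real n + 2/3) * (2 * real n + 4/3) * \<bar>F5 n 0\<bar>)" for n
    by (simp add: F5_rho abs_mult divide_simps add_pos_nonneg) (simp add: algebra_simps)
  show "(\<lambda>n. (real n + 5/3) * (2 * real n + 10/3) / ((real n + 2/3) * (2 * real n + 4/3)) * \<bar>rho5 n 0\<bar>) \<longlonglongrightarrow> 1/4"
    unfolding rho5_def by simp real_asymp
qed simp_all

lemma R5_S1_term_LIMSEQ: "(\<lambda>k. R5 n k * S1_term k) \<longlonglongrightarrow> 0"
  unfolding R5_def S1_term_def by real_asymp

lemma T5_Suc: "T5 (Suc n) = T5 n * q5 n"
proof -
  have "0 < 270 * real n ^ 3 + 720 * real n ^ 2 + 633 * real n + 185"
    by (intro add_nonneg_pos add_nonneg_nonneg mult_nonneg_nonneg) simp_all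
  moreover have "0 < pochhammer (2/3::real) n" "0 < pochhammer (4/3::real) n" "0 < pochhammer (11/6::real) n"
    "0 < real n + 4/3" "0 < real n + 11/6" "0 < 6 * real n + 13"
    by (simp_all add: pochhammer_pos add_pos_nonneg)
  ultimately show ?thesis unfolding T5_def q5_def pochhammer_Suc power_Suc
    by (simp add: divide_simps) (simp add: algebra_simps)
qed

lemma R5_term_ratio: "R5 (Suc n) 0 * rho5 n 0 = R5 n 0 * q5 n"
proof -
  have "0 < 270 * real n ^ 3 + 720 * real n ^ 2 + 633 * real n + 185"
    by (intro add_nonneg_pos add_nonneg_nonneg mult_nonneg_nonneg) simp_all
  moreover have "0 < 2 * real n + 5/3" "0 < 2 * real n + 7/3" "0 < 2 * real n + 8/3" "0 < 2 * real n + 10/3"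
    "0 < 2 * real n + 11/3" "0 < 2 * real n + 13/3" "0 < real n + 4/3" "0 < real n + 11/6" "0 < 6 * real n + 13"
    by (simp_all add: add_pos_nonneg)
  ultimately show ?thesis unfolding rho5_def R5_def q5_def by (simp add: divide_simps) algebra
qed

lemma T5_sums: "T5 sums (120 * (1/2 - sqrt 3 * pi / 18))"
proof (rule sums_by_equal_term_ratios)
  show "(\<lambda>n. R5 n 0 * F5 n 0) sums (1/2 - sqrt 3 * pi / 18)"
    by (rule wz_sums_by_certificate[OF S1_sums S1_term_nonneg F5_0 F5_rho F5_sig R5_certificate
          F5_bound F5_bound_LIMSEQ R5_S1_term_LIMSEQ])
  show "T5 0 = 120 * (R5 0 0 * F5 0 0)" by (simp add: T5_def R5_def F5_def)
  show "T5 (Suc n) = T5 n * q5 n" for n by (rule T5_Suc)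
  show "R5 (Suc n) 0 * F5 (Suc n) 0 = R5 n 0 * F5 n 0 * q5 n" for n
    using R5_term_ratio[of n] by (simp add: F5_rho)
qed

definition C6 :: "nat \<Rightarrow> real" where
  "C6 n = (-1) ^ n * pochhammer 1 n * pochhammer (2/3) n * pochhammer (1/6) n / (9 * pochhammer (1/2) n)"

definition F6 :: "nat \<Rightarrow> nat \<Rightarrow> real" where
  "F6 n k = C6 n / (pochhammer (real k + real n + 2/3) (Suc n) * pochhammer (real k + 4/3) (Suc n))"

definition sig6 :: "nat \<Rightarrow> nat \<Rightarrow> real" where
  "sig6 n k = (real k + real n + 2/3) / (real k + 2 * real n + 5/3) * ((real k + 4/3) / (real k + real n + 7/3))"

definition rho6 :: "nat \<Rightarrow> nat \<Rightarrow> real" where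
  "rho6 n k = - ((real n + 1) * (real n + 2/3) * (real n + 1/6) / (real n + 1/2))
     * ((real k + real n + 2/3)
        / ((real k + 2 * real n + 5/3) * (real k + 2 * real n + 8/3) * (real k + real n + 7/3)))"

definition R6 :: "nat \<Rightarrow> nat \<Rightarrow> real" where
  "R6 n k = (30 * real n ^ 2 + 24 * real n * real k + 6 * real k ^ 2 + 45 * real n + 19 * real k + 16)
     / ((2 * real n + 1) * (6 * real k + 12 * real n + 10))"

definition T6 :: "nat \<Rightarrow> real" where
  "T6 n = (30 * real n ^ 2 + 45 * real n + 16)
     * (pochhammer (1/6) n * pochhammer (2/3) n ^ 2 * pochhammer 1 n
        / (pochhammer (4/3) n * pochhammer (7/3) n * pochhammer (3/2) n * pochhammer (11/6) n))
     * (1 / (-4) ^ n)"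

definition q6 :: "nat \<Rightarrow> real" where
  "q6 n = (30 * (real n + 1) ^ 2 + 45 * (real n + 1) + 16) / (30 * real n ^ 2 + 45 * real n + 16)
     * ((real n + 1/6) * (real n + 2/3) ^ 2 * (real n + 1)
        / ((real n + 4/3) * (real n + 7/3) * (real n + 3/2) * (real n + 11/6))) * (- 1/4)"

lemma C6_Suc: "C6 (Suc n) = - ((real n + 1) * (real n + 2/3) * (real n + 1/6) / (real n + 1/2)) * C6 n"
proof -
  have "0 < pochhammer (1/2::real) n" "0 < real n + 1/2" by (simp_all add: pochhammer_pos add_pos_nonneg)
  then show ?thesis unfolding C6_def pochhammer_Suc power_Suc
    by (simp add: divide_simps) (simp add: algebra_simps)
qed

lemma F6_0: "F6 0 k = S1_term k"
  by (simp add: F6_def C6_def S1_term_def field_simps)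

lemma F6_sig: "F6 n (Suc k) = sig6 n k * F6 n k"
proof -
  have "real (Suc k) + real n + 2/3 = (real k + real n + 2/3) + 1"
    "real (Suc k) + 4/3 = (real k + 4/3) + 1" by simp_all
  then show ?thesis unfolding F6_def sig6_def
    by (simp only:) (subst quotient_pochhammer_shift; simp add: add_pos_nonneg algebra_simps)
qed

lemma F6_rho: "F6 (Suc n) k = rho6 n k * F6 n k"
proof -
  define a b where "a = real k + real n + 2/3" and "b = real k + 4/3"
  have "0 < a" "0 < b" by (simp_all add: a_def b_def add_pos_nonneg)
  then have pos: "0 < pochhammer a (Suc n)" "0 < pochhammer b (Suc n)"
    "0 < a + real (Suc n)" "0 < a + real (Suc (Suc n))" "0 < b + real (Suc n)" "0 < real n + 1/2"
    by (simp_all add: pochhammer_pos add_pos_nonneg)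
  have "real k + real (Suc n) + 2/3 = a + 1"
    by (simp add: a_def)
  then have eqs: "F6 (Suc n) k = - ((real n + 1) * (real n + 2/3) * (real n + 1/6) / (real n + 1/2)) * C6 n /
      (pochhammer a (Suc n) * (a + real (Suc n)) * (a + real (Suc (Suc n))) / a
       * (pochhammer b (Suc n) * (b + real (Suc n))))"
    "F6 n k = C6 n / (pochhammer a (Suc n) * pochhammer b (Suc n))"
    "rho6 n k = - ((real n + 1) * (real n + 2/3) * (real n + 1/6) / (real n + 1/2))
      * (a / ((a + real (Suc n)) * (a + real (Suc (Suc n))) * (b + real (Suc n))))"
    using \<open>0 < a\<close> unfolding F6_def rho6_def b_def[symmetric]
    by (simp_all only: C6_Suc pochhammer_add_one pochhammer_Suc[of a "Suc n"] pochhammer_Suc[of b "Suc n"]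
        less_irrefl not_False_eq_True)
      (simp_all add: a_def b_def algebra_simps)
  show ?thesis unfolding eqs using pos \<open>0 < a\<close> \<open>0 < b\<close> by (simp add: divide_simps)
qed

lemma R6_certificate: "rho6 n k - 1 = R6 n (Suc k) * sig6 n k - R6 n k"
proof -
  have "0 < real k + 2 * real n + 5/3" "0 < real k + 2 * real n + 8/3" "0 < real k + real n + 7/3"
    "0 < real n + 1/2" "0 < 2 * real n + 1" "0 < 6 * real k + 12 * real n + 10" "0 < 6 * real k + 12 * real n + 16"
    by (simp_all add: add_pos_nonneg)
  then show ?thesis unfolding rho6_def R6_def sig6_def by (simp add: divide_simps) algebra
qed

lemma F6_bound: "\<bar>F6 n k\<bar> \<le> 9 * (real n + 2/3) * (4/3) * \<bar>F6 n 0\<bar> * S1_term k"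
proof -
  have "(real k + (real n + 2/3)) / (real n + 2/3) * pochhammer (real n + 2/3) (Suc n)
      \<le> pochhammer (real k + (real n + 2/3)) (Suc n)"
    "(real k + 4/3) / (4/3) * pochhammer (4/3) (Suc n) \<le> pochhammer (real k + 4/3) (Suc n)"
    by (rule pochhammer_shift_ge; simp)+
  from abs_quotient_le_S1_term[OF _ _ _ _ this, of "C6 n"] show ?thesis
    by (simp add: F6_def pochhammer_pos add_pos_nonneg add.assoc)
qed

lemma F6_bound_LIMSEQ: "(\<lambda>n. 9 * (real n + 2/3) * (4/3) * \<bar>F6 n 0\<bar>) \<longlonglongrightarrow> 0"
proof (rule LIMSEQ_zero_by_ratio)
  show "9 * (real (Suc n) + 2/3) * (4/3) * \<bar>F6 (Suc n) 0\<bar>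
      = (real n + 5/3) / (real n + 2/3) * \<bar>rho6 n 0\<bar> * (9 * (real n + 2/3) * (4/3) * \<bar>F6 n 0\<bar>)" for n
    by (simp add: F6_rho abs_mult divide_simps add_pos_nonneg) (simp add: algebra_simps)
  show "(\<lambda>n. (real n + 5/3) / (real n + 2/3) * \<bar>rho6 n 0\<bar>) \<longlonglongrightarrow> 1/4"
    unfolding rho6_def by simp real_asymp
qed simp_all

lemma R6_S1_term_LIMSEQ: "(\<lambda>k. R6 n k * S1_term k) \<longlonglongrightarrow> 0"
  unfolding R6_def S1_term_def by real_asymp

lemma T6_Suc: "T6 (Suc n) = T6 n * q6 n"
proof -
  have "0 < 30 * real n ^ 2 + 45 * real n + 16"
    by (intro add_nonneg_pos add_nonneg_nonneg mult_nonneg_nonneg) simp_all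
  moreover have "0 < pochhammer (4/3::real) n" "0 < pochhammer (7/3::real) n" "0 < pochhammer (3/2::real) n"
    "0 < pochhammer (11/6::real) n" "0 < real n + 4/3" "0 < real n + 7/3" "0 < real n + 3/2" "0 < real n + 11/6"
    by (simp_all add: pochhammer_pos add_pos_nonneg)
  ultimately show ?thesis unfolding T6_def q6_def pochhammer_Suc power_Suc
    by (simp add: divide_simps) (simp add: algebra_simps)
qed

lemma R6_term_ratio: "R6 (Suc n) 0 * rho6 n 0 = R6 n 0 * q6 n"
proof -
  have "0 < 30 * real n ^ 2 + 45 * real n + 16"
    by (intro add_nonneg_pos add_nonneg_nonneg mult_nonneg_nonneg) simp_all
  moreover have "0 < 2 * real n + 5/3" "0 < 2 * real n + 8/3" "0 < real n + 7/3" "0 < real n + 1/2"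
    "0 < 2 * real n + 1" "0 < 2 * real n + 3" "0 < 12 * real n + 10" "0 < 12 * real n + 22"
    "0 < real n + 4/3" "0 < real n + 3/2" "0 < real n + 11/6"
    by (simp_all add: add_pos_nonneg)
  ultimately show ?thesis unfolding rho6_def R6_def q6_def by (simp add: divide_simps) algebra
qed

lemma T6_sums: "T6 sums (80 * (1/2 - sqrt 3 * pi / 18))"
proof (rule sums_by_equal_term_ratios)
  show "(\<lambda>n. R6 n 0 * F6 n 0) sums (1/2 - sqrt 3 * pi / 18)"
    by (rule wz_sums_by_certificate[OF S1_sums S1_term_nonneg F6_0 F6_rho F6_sig R6_certificate
          F6_bound F6_bound_LIMSEQ R6_S1_term_LIMSEQ])
  show "T6 0 = 80 * (R6 0 0 * F6 0 0)" by (simp add: T6_def R6_def F6_def C6_def)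
  show "T6 (Suc n) = T6 n * q6 n" for n by (rule T6_Suc)
  show "R6 (Suc n) 0 * F6 (Suc n) 0 = R6 n 0 * F6 n 0 * q6 n" for n
    using R6_term_ratio[of n] by (simp add: F6_rho)
qed

theorem proposition3p2:
  fixes S1 :: real
  defines "S1 \<equiv> 1/2 - sqrt 3 * pi / 18"
  shows "((\<lambda>k::nat. 1 / ((3 * real k + 2) * (3 * real k + 4))) sums S1) \<and>
     ((\<lambda>n::nat. 1 / ((3 * real n + 1) * (3 * real n + 4) * real ((2*n+2) choose (n+1))))
           sums (2/3 * S1)) \<and>
     ((\<lambda>n::nat. (27 * real n ^ 2 + 51 * real n + 23) * pochhammer (2/3) n
           / ((3 * real n + 1) * (3 * real n + 4) * (real n + 1) * pochhammer (11/6) n)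
           * (1 / 4 ^ n)) sums (30 * S1)) \<and>
     ((\<lambda>n::nat. (189 * real n ^ 3 + 495 * real n ^ 2 + 414 * real n + 110)
           / ((6 * real n + 1) * (6 * real n + 7) * (6 * real n + 5) * (2 * real n + 1))
           * (1 / real ((6*n) choose (3*n)))) sums (16 * S1)) \<and>
     ((\<lambda>n::nat. (270 * real n ^ 3 + 720 * real n ^ 2 + 633 * real n + 185)
           / ((real n + 1) * (6 * real n + 7))
           * (pochhammer (2/3) n ^ 2 / (pochhammer (4/3) n * pochhammer (11/6) n))
           * (1 / (-4) ^ n)) sums (120 * S1)) \<and>
     ((\<lambda>n::nat. (30 * real n ^ 2 + 45 * real n + 16)
           * (pochhammer (1/6) n * pochhammer (2/3) n ^ 2 * pochhammer 1 n
              / (pochhammer (4/3) n * pochhammer (7/3) n * pochhammer (3/2) n * pochhammer (11/6) n))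
           * (1 / (-4) ^ n)) sums (80 * S1))"
  unfolding S1_def
  using S1_sums T2_sums T3_sums T4_sums T5_sums T6_sums
  unfolding S1_term_def[abs_def] T2_def[abs_def] T3_def[abs_def] T4_def[abs_def] T5_def[abs_def]
    T6_def[abs_def]
  by (intro conjI)

end
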